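(* Let $d\ge 1$. There is a constant $C>0$ depending only on $d$ such that for all $n\ge d+1$, every $\mathcal{F}$ and $B_1,\dots,B_m$ as in the context, and every $A\subseteq[n]$, the number of indices $i\in[m]$ with $B_i=A$ is at most $C$. Consequently, for each integer $0\le s\le d$, the number of indices $i\in[m]$ with $|B_i|=s$ is at most $C\binom{n}{s}$.
   Context: Let $\mathcal{F}=\{F_1,\dots,F_m\}\subseteq\binom{[n]}{d+1}$ consist of distinct sets and have VC-dimension at most $d$ (no $(d+1)$-set $S$ is shattered, i.e. no $S$ such that every $A\subseteq S$ equals $F\cap S$ for some $F\in\mathcal{F}$). For $i\in[m]$, call $B\subsetneq F_i$ admissible for $F_i$ if $F\cap F_i\neq B$ for every $F\in\mathcal{F}$ (admissible sets exist by the VC-dimension assumption). For each $i$, $B_i$ is a fixed admissible set for $F_i$ of maximum cardinality among all admissible sets for $F_i$. *)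

theory Defs
  imports Complex_Main
begin

definition shatters :: "'a set set \<Rightarrow> 'a set \<Rightarrow> bool" where
  "shatters \<F> S \<longleftrightarrow> (\<forall>A. A \<subseteq> S \<longrightarrow> (\<exists>F\<in>\<F>. F \<inter> S = A))"

definition vc_dim_le :: "'a set set \<Rightarrow> nat \<Rightarrow> bool" where
  "vc_dim_le \<F> d \<longleftrightarrow> \<not> (\<exists>S. finite S \<and> card S = d + 1 \<and> shatters \<F> S)"

definition admissible :: "'a set set \<Rightarrow> 'a set \<Rightarrow> 'a set \<Rightarrow> bool" where
  "admissible \<F> F B \<longleftrightarrow> B \<subset> F \<and> (\<forall>G\<in>\<F>. G \<inter> F \<noteq> B)"

definition max_admissible :: "'a set set \<Rightarrow> 'a set \<Rightarrow> 'a set \<Rightarrow> bool" where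
  "max_admissible \<F> F B \<longleftrightarrow> admissible \<F> F B \<and>
     (\<forall>B'. admissible \<F> F B' \<longrightarrow> card B' \<le> card B)"

text \<open>The setting of the context: Fs = [F_1,...,F_m] (0-indexed list) of distinct
  (d+1)-subsets of [n] = {1..n}, of VC-dimension at most d, with B i a maximum
  admissible set for Fs ! i.\<close>
definition setting :: "nat \<Rightarrow> nat \<Rightarrow> nat set list \<Rightarrow> (nat \<Rightarrow> nat set) \<Rightarrow> bool" where
  "setting d n Fs B \<longleftrightarrow>
     distinct Fs \<and>
     (\<forall>F\<in>set Fs. F \<subseteq> {1..n} \<and> card F = d + 1) \<and>
     vc_dim_le (set Fs) d \<and>
     (\<forall>i<length Fs. max_admissible (set Fs) (Fs ! i) (B i))"

end

theory Submission
  imports Defs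
begin

text \<open>Fix A and let \<G> be the members of a family \<F> of k-sets for which A is a maximum
  admissible set. The members of \<G> containing a set T \<supseteq> A are counted by downward
  induction on |T|; for |T| = k the only candidate is T itself. Otherwise some G \<in> \<F>
  meets every member of \<G> outside T: for T = A any member of \<G> does, as its trace on
  another member is not A; for T \<noteq> A pick F \<in> \<G> containing T, then A \<union> (F - T) is a
  proper subset of F larger than A, hence not admissible, so it is the trace G \<inter> F
  of some G \<in> \<F>. Branching over the at most k points of G - T bounds the count by
  k^(k - |T|). Thus every A is the maximum admissible set of at most k^k members,
  and summing over the s-subsets of [n] gives the second bound.\<close>

lemma admissible_trace_escapes:
  assumes "admissible \<F> F A" and "G \<in> \<F>" and "A \<subseteq> G"
  obtains x where "x \<in> G" "x \<in> F" "x \<notin> A"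
  using assms unfolding admissible_def by blast

lemma max_admissible_ex_separator:
  assumes uniform: "\<forall>G\<in>\<F>. finite G \<and> card G = k"
    and "\<G> \<subseteq> \<F>" and max_adm: "\<forall>F\<in>\<G>. max_admissible \<F> F A"
    and "F \<in> \<G>" and "T \<subseteq> F" and "A \<subseteq> T" and "card T < k"
  obtains G where "G \<in> \<F>" "\<forall>F'\<in>\<G>. \<exists>x\<in>G - T. x \<in> F'"
proof -
  have adm: "admissible \<F> F' A" if "F' \<in> \<G>" for F'
    using max_adm that unfolding max_admissible_def by blast
  have F: "F \<in> \<F>" "finite F" "card F = k" using uniform \<open>F \<in> \<G>\<close> \<open>\<G> \<subseteq> \<F>\<close> by auto
  show ?thesis
  proof (cases "T = A")
    case True
    have "A \<subseteq> F" using adm[OF \<open>F \<in> \<G>\<close>] unfolding admissible_def by blast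
    then have "\<exists>x\<in>F - T. x \<in> F'" if "F' \<in> \<G>" for F'
      using admissible_trace_escapes[OF adm[OF that] F(1)] True by blast
    with that F(1) show ?thesis by blast
  next
    case False
    then obtain t where t: "t \<in> T" "t \<notin> A" using \<open>A \<subseteq> T\<close> by blast
    have "finite T" using F(2) \<open>T \<subseteq> F\<close> by (rule finite_subset[rotated])
    define B' where "B' = A \<union> (F - T)"
    have "B' \<subset> F"
      using t \<open>T \<subseteq> F\<close> adm[OF \<open>F \<in> \<G>\<close>] unfolding B'_def admissible_def by blast
    have "card T < card F" using F \<open>card T < k\<close> by simp
    then have "F - T \<noteq> {}" using card_mono[OF \<open>finite T\<close>, of F] by auto
    then have "card (F - T) > 0" using F(2) by (simp add: card_gt_0_iff)
    moreover have "card B' = card A + card (F - T)"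
    proof -
      have "finite A" using \<open>finite T\<close> \<open>A \<subseteq> T\<close> by (rule finite_subset[rotated])
      then show ?thesis unfolding B'_def using F(2) \<open>A \<subseteq> T\<close> by (intro card_Un_disjoint) auto
    qed
    ultimately have "card A < card B'" by simp
    then have "\<not> admissible \<F> F B'"
      using max_adm \<open>F \<in> \<G>\<close> unfolding max_admissible_def by (meson not_le)
    then obtain G where G: "G \<in> \<F>" "G \<inter> F = B'"
      using \<open>B' \<subset> F\<close> unfolding admissible_def by blast
    have "A \<subseteq> G" using G unfolding B'_def by blast
    have "\<exists>x\<in>G - T. x \<in> F'" if F': "F' \<in> \<G>" for F'
    proof -
      obtain x where x: "x \<in> G" "x \<in> F'" "x \<notin> A"
        using admissible_trace_escapes[OF adm[OF F'] G(1) \<open>A \<subseteq> G\<close>] .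
      have "x \<notin> T" using x G \<open>T \<subseteq> F\<close> unfolding B'_def by blast
      with x show ?thesis by blast
    qed
    with that G(1) show ?thesis by blast
  qed
qed

lemma card_max_admissible_supersets_le:
  assumes uniform: "\<forall>G\<in>\<F>. finite G \<and> card G = k"
    and "finite \<G>" and "\<G> \<subseteq> \<F>" and max_adm: "\<forall>F\<in>\<G>. max_admissible \<F> F A"
    and "finite T" and "A \<subseteq> T"
  shows "card {F\<in>\<G>. T \<subseteq> F} \<le> k ^ (k - card T)"
  using \<open>finite T\<close> \<open>A \<subseteq> T\<close>
proof (induction "k - card T" arbitrary: T)
  case 0
  have "F = T" if "F \<in> \<G>" "T \<subseteq> F" for F
  proof -
    have "finite F" "card F \<le> card T" using uniform that \<open>\<G> \<subseteq> \<F>\<close> 0 by auto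
    then show ?thesis using card_seteq \<open>T \<subseteq> F\<close> by blast
  qed
  then have "{F\<in>\<G>. T \<subseteq> F} \<subseteq> {T}" by blast
  then have "card {F\<in>\<G>. T \<subseteq> F} \<le> 1" using card_mono[of "{T}"] by simp
  then show ?case using 0 by simp
next
  case (Suc m)
  let ?S = "\<lambda>T. {F\<in>\<G>. T \<subseteq> F}"
  show ?case
  proof (cases "?S T = {}")
    case True
    then show ?thesis unfolding True by simp
  next
    case False
    then obtain F where "F \<in> \<G>" "T \<subseteq> F" by blast
    have "card T < k" using Suc.hyps(2) by simp
    then obtain G where G: "G \<in> \<F>" "\<forall>F'\<in>\<G>. \<exists>x\<in>G - T. x \<in> F'"
      using max_admissible_ex_separator[OF uniform \<open>\<G> \<subseteq> \<F>\<close> max_adm \<open>F \<in> \<G>\<close> \<open>T \<subseteq> F\<close>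
          \<open>A \<subseteq> T\<close>] by blast
    have G_fin: "finite G" "card G = k" using uniform G(1) by simp_all
    have "?S T \<subseteq> (\<Union>x\<in>G - T. ?S (insert x T))"
    proof
      fix F assume F: "F \<in> ?S T"
      then obtain x where "x \<in> G - T" "x \<in> F" using G(2) by blast
      with F show "F \<in> (\<Union>x\<in>G - T. ?S (insert x T))" by blast
    qed
    moreover have "finite (\<Union>x\<in>G - T. ?S (insert x T))"
      using \<open>finite \<G>\<close> G_fin(1) by simp
    ultimately have "card (?S T) \<le> card (\<Union>x\<in>G - T. ?S (insert x T))"
      by (rule card_mono[rotated])
    also have "\<dots> \<le> (\<Sum>x\<in>G - T. card (?S (insert x T)))"
      using G_fin by (intro card_UN_le) simp
    also have "\<dots> \<le> (\<Sum>x\<in>G - T. k ^ m)"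
    proof (rule sum_mono)
      fix x assume "x \<in> G - T"
      then have "m = k - card (insert x T)" using Suc.hyps(2) Suc.prems(1) by simp
      moreover have "finite (insert x T)" "A \<subseteq> insert x T" using Suc.prems by auto
      ultimately show "card (?S (insert x T)) \<le> k ^ m" using Suc.hyps(1) by metis
    qed
    also have "\<dots> \<le> k * k ^ m"
      using card_mono[OF G_fin(1), of "G - T"] G_fin by simp
    finally show ?thesis by (simp flip: Suc.hyps(2))
  qed
qed

lemma card_max_admissible_le:
  assumes uniform: "\<forall>G\<in>\<F>. finite G \<and> card G = k"
    and "finite \<G>" and "\<G> \<subseteq> \<F>" and max_adm: "\<forall>F\<in>\<G>. max_admissible \<F> F A"
  shows "card \<G> \<le> k ^ k"
proof (cases "\<G> = {}")
  case False
  then obtain F where "F \<in> \<G>" by blast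
  then have "A \<subset> F" "finite F" "card F = k"
    using max_adm uniform \<open>\<G> \<subseteq> \<F>\<close> unfolding max_admissible_def admissible_def by auto
  then have "finite A" "card A < k" using finite_subset psubset_card_mono by auto
  have "{F\<in>\<G>. A \<subseteq> F} = \<G>"
    using max_adm unfolding max_admissible_def admissible_def by blast
  then have "card \<G> \<le> k ^ (k - card A)"
    using card_max_admissible_supersets_le[OF assms \<open>finite A\<close> order_refl] by simp
  also have "\<dots> \<le> k ^ k" using \<open>card A < k\<close> by (intro power_increasing) auto
  finally show ?thesis .
qed simp

lemma card_le_card_mult_fibres:
  assumes "finite Y" and "f ` X \<subseteq> Y" and "\<And>y. y \<in> Y \<Longrightarrow> card {x\<in>X. f x = y} \<le> c"
  shows "card X \<le> card Y * c"
proof -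
  have "X = (\<Union>y\<in>Y. {x\<in>X. f x = y})" using \<open>f ` X \<subseteq> Y\<close> by blast
  then have "card X \<le> (\<Sum>y\<in>Y. card {x\<in>X. f x = y})"
    using card_UN_le[OF \<open>finite Y\<close>] by metis
  also have "\<dots> \<le> (\<Sum>y\<in>Y. c)" using assms(3) by (rule sum_mono)
  finally show ?thesis by simp
qed

lemma setting_uniform:
  assumes "setting d n Fs B"
  shows "\<forall>F\<in>set Fs. finite F \<and> card F = d + 1"
  using assms unfolding setting_def by (simp add: card_ge_0_finite)

lemma setting_max_admissible:
  assumes "setting d n Fs B" and "i < length Fs"
  shows "max_admissible (set Fs) (Fs ! i) (B i)"
  using assms unfolding setting_def by blast

lemma setting_B_subset:
  assumes "setting d n Fs B" and "i < length Fs"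
  shows "B i \<subseteq> {1..n}"
proof -
  have "B i \<subseteq> Fs ! i"
    using setting_max_admissible[OF assms] unfolding max_admissible_def admissible_def by blast
  moreover have "Fs ! i \<subseteq> {1..n}" using assms nth_mem unfolding setting_def by blast
  ultimately show ?thesis by blast
qed

lemma setting_card_B_eq_le:
  assumes "setting d n Fs B"
  shows "card {i. i < length Fs \<and> B i = A} \<le> (d + 1) ^ (d + 1)"
proof -
  let ?I = "{i. i < length Fs \<and> B i = A}"
  have "inj_on ((!) Fs) ?I" using assms unfolding setting_def inj_on_def
    by (simp add: nth_eq_iff_index_eq)
  then have "card ?I = card ((!) Fs ` ?I)" by (rule card_image[symmetric])
  also have "\<dots> \<le> (d + 1) ^ (d + 1)"
  proof (rule card_max_admissible_le)
    show "\<forall>G\<in>set Fs. finite G \<and> card G = d + 1" using setting_uniform[OF assms] .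
    show "\<forall>F\<in>(!) Fs ` ?I. max_admissible (set Fs) F A"
      using setting_max_admissible[OF assms] by auto
  qed auto
  finally show ?thesis .
qed

lemma setting_card_B_card_eq_le:
  assumes st: "setting d n Fs B"
  shows "card {i. i < length Fs \<and> card (B i) = s} \<le> (d + 1) ^ (d + 1) * (n choose s)"
proof -
  let ?Y = "{A. A \<subseteq> {1..n} \<and> card A = s}"
  let ?C = "(d + 1) ^ (d + 1)"
  have "card {i. i < length Fs \<and> card (B i) = s} \<le> card ?Y * ?C"
  proof (rule card_le_card_mult_fibres)
    show "B ` {i. i < length Fs \<and> card (B i) = s} \<subseteq> ?Y"
      using setting_B_subset[OF st] by blast
    fix A
    have "card {i \<in> {i. i < length Fs \<and> card (B i) = s}. B i = A}
        \<le> card {i. i < length Fs \<and> B i = A}" by (intro card_mono) auto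
    then show "card {i \<in> {i. i < length Fs \<and> card (B i) = s}. B i = A} \<le> ?C"
      using setting_card_B_eq_le[OF st] by (meson order_trans)
  qed simp
  moreover have "card ?Y = n choose s" using n_subsets[of "{1..n}" s] by simp
  ultimately show ?thesis by (simp add: mult.commute)
qed

theorem claim3p2:
  fixes d :: nat
  assumes "d \<ge> 1"
  shows "\<exists>C::real. C > 0 \<and>
    (\<forall>n Fs B A. n \<ge> d + 1 \<and> setting d n Fs B \<and> A \<subseteq> {1..n} \<longrightarrow>
        real (card {i. i < length Fs \<and> B i = A}) \<le> C) \<and>
    (\<forall>n Fs B s. n \<ge> d + 1 \<and> setting d n Fs B \<and> s \<le> d \<longrightarrow>
        real (card {i. i < length Fs \<and> card (B i) = s}) \<le> C * real (n choose s))"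
proof -
  define C where "C = (d + 1) ^ (d + 1)"
  have "real C > 0" unfolding C_def by (simp only: of_nat_0_less_iff) simp
  moreover have "real (card {i. i < length Fs \<and> B i = A}) \<le> real C"
    if "setting d n Fs B" for n Fs B A
    using setting_card_B_eq_le[OF that] unfolding C_def by (simp only: of_nat_le_iff)
  moreover have "real (card {i. i < length Fs \<and> card (B i) = s}) \<le> real C * real (n choose s)"
    if "setting d n Fs B" for n Fs B s
    using setting_card_B_card_eq_le[OF that] unfolding C_def by (metis of_nat_le_iff of_nat_mult)
  ultimately show ?thesis by (intro exI[of _ "real C"]) blast
qed

end
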